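(* Let $\mathscr C$ be the small category defined below. Let $\Omega_1,\Omega_2,\Omega$ be objects of $\mathscr C$ with $\Omega_j\neq\emptyset$, and let $\phi_j:\Omega_j\to\Omega$ ($j=1,2$) be morphisms given by integers $n_j\in\mathrm{Hom}_{\mathscr C}(\Omega_j,\Omega)$. Let $n=\mathrm{lcm}(n_1,n_2)$, write $n=a_jn_j$ with $a_j\in\mathbb{N}^{\times}$, and let $\Omega':=\{\lambda\in[0,\infty)\mid a_j\lambda\in\Omega_j,\ j=1,2\}$. Then $\Omega'$ is an object of $\mathscr C$; if $\Omega'\neq\emptyset$ one has $a_j\in\mathrm{Hom}_{\mathscr C}(\Omega',\Omega_j)$ and $(\Omega',a_1,a_2)$ is the pullback (fibered product) of $\phi_1,\phi_2$ in $\mathscr C$; if $\Omega'=\emptyset$ the pullback of $\phi_1,\phi_2$ is the initial object $\emptyset$ of $\mathscr C$.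
   Context: $\mathbb{N}^{\times}$ denotes the multiplicative monoid of positive integers. The category $\mathscr C$ has as objects the (possibly empty) bounded open subintervals $\Omega$ of the half-line $[0,\infty)$ (with its usual topology, so intervals of the form $[0,a)$, $a>0$, are included). For $\Omega\neq\emptyset$, $\mathrm{Hom}_{\mathscr C}(\Omega,\Omega')=\{n\in\mathbb{N}^{\times}\mid n\Omega\subset\Omega'\}$, and $\mathrm{Hom}_{\mathscr C}(\emptyset,\Omega')$ is a one-point set for every $\Omega'$; composition is multiplication of integers. Thus $\emptyset$ is the initial object. *)

theory Defs
  imports "HOL-Analysis.Analysis"
begin

definition C_obj :: "real set \<Rightarrow> bool" where
  "C_obj \<Omega> \<longleftrightarrow> openin (top_of_set {0..}) \<Omega> \<and> bounded \<Omega> \<and> is_interval \<Omega>"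

text \<open>Morphisms are encoded as natural numbers, composition is multiplication.
  The unique morphism out of the empty object is encoded by 0 (so that composition
  by multiplication stays correct: g * 0 = 0).\<close>
definition C_hom :: "real set \<Rightarrow> real set \<Rightarrow> nat set" where
  "C_hom \<Omega> \<Omega>' = (if \<Omega> = {} then {0}
      else {n. n > 0 \<and> (\<lambda>x. real n * x) ` \<Omega> \<subseteq> \<Omega>'})"

definition C_pullback ::
  "real set \<Rightarrow> real set \<Rightarrow> real set \<Rightarrow> nat \<Rightarrow> nat \<Rightarrow> real set \<Rightarrow> nat \<Rightarrow> nat \<Rightarrow> bool" where
  "C_pullback X1 X2 X f1 f2 P p1 p2 \<longleftrightarrow>
     C_obj P \<and> p1 \<in> C_hom P X1 \<and> p2 \<in> C_hom P X2 \<and> f1 * p1 = f2 * p2 \<and>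
     (\<forall>Q q1 q2. C_obj Q \<and> q1 \<in> C_hom Q X1 \<and> q2 \<in> C_hom Q X2 \<and> f1 * q1 = f2 * q2 \<longrightarrow>
        (\<exists>!u. u \<in> C_hom Q P \<and> p1 * u = q1 \<and> p2 * u = q2))"

end

theory Submission
  imports Defs
begin

text \<open>A cone (Q, q1, q2) over the two morphisms satisfies n1 q1 = n2 q2; this common
  multiple of n1 and n2 is a multiple u of their lcm, so qj = aj u with aj = lcm(n1,n2)/nj.
  Dilating Q by u then lands in the set of t \<ge> 0 with aj t \<in> \<Omega>j, an intersection of
  preimages of \<Omega>1, \<Omega>2 under dilations and hence again a bounded open interval; u is unique
  because aj > 0. If that set is empty, no nonempty object carries a cone, so the empty
  object is the pullback.\<close>

definition dilation_preimage :: "nat \<Rightarrow> real set \<Rightarrow> real set" where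
  "dilation_preimage a \<Omega> = {t. 0 \<le> t \<and> real a * t \<in> \<Omega>}"

lemma C_obj_nonneg: "C_obj Q \<Longrightarrow> x \<in> Q \<Longrightarrow> 0 \<le> x"
  unfolding C_obj_def using openin_imp_subset by fastforce

lemma C_obj_empty: "C_obj {}"
  by (simp add: C_obj_def)

lemma C_hom_empty: "C_hom {} \<Omega> = {0}"
  by (simp add: C_hom_def)

lemma C_hom_nonempty_iff:
  "Q \<noteq> {} \<Longrightarrow> u \<in> C_hom Q \<Omega> \<longleftrightarrow> u > 0 \<and> (\<lambda>x. real u * x) ` Q \<subseteq> \<Omega>"
  by (simp add: C_hom_def)

lemma C_obj_Int: "C_obj A \<Longrightarrow> C_obj B \<Longrightarrow> C_obj (A \<inter> B)"
  unfolding C_obj_def by (auto intro: is_interval_Int)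

lemma C_obj_dilation_preimage:
  assumes "C_obj \<Omega>" "a > 0"
  shows "C_obj (dilation_preimage a \<Omega>)"
proof -
  have \<Omega>: "openin (top_of_set {0..}) \<Omega>" "bounded \<Omega>" "is_interval \<Omega>"
    using assms(1) by (auto simp: C_obj_def)
  have "dilation_preimage a \<Omega> = {0..} \<inter> (\<lambda>t. real a * t) -` \<Omega>"
    by (auto simp: dilation_preimage_def)
  moreover have "continuous_on {0::real..} (\<lambda>t. real a * t)"
    by (intro continuous_intros)
  moreover have "(\<lambda>t. real a * t) \<in> {0::real..} \<rightarrow> {0..}"
    by auto
  ultimately have "openin (top_of_set {0..}) (dilation_preimage a \<Omega>)"
    using \<Omega>(1) continuous_openin_preimage by metis
  moreover have "bounded (dilation_preimage a \<Omega>)"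
  proof -
    obtain B where B: "\<forall>x\<in>\<Omega>. \<bar>x\<bar> \<le> B"
      using \<Omega>(2) by (auto simp: bounded_real)
    have "\<bar>t\<bar> \<le> B" if "t \<in> dilation_preimage a \<Omega>" for t
    proof -
      have "0 \<le> t" "real a * t \<le> B"
        using that B by (auto simp: dilation_preimage_def)
      moreover have "1 * t \<le> real a * t"
        using assms(2) \<open>0 \<le> t\<close> by (intro mult_right_mono) auto
      ultimately show ?thesis by simp
    qed
    then show ?thesis by (auto simp: bounded_real)
  qed
  moreover have "is_interval (dilation_preimage a \<Omega>)"
    unfolding is_interval_1
  proof (intro ballI allI impI)
    fix s t x assume "s \<in> dilation_preimage a \<Omega>" "t \<in> dilation_preimage a \<Omega>" "s \<le> x \<and> x \<le> t"
    then show "x \<in> dilation_preimage a \<Omega>"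
      using \<Omega>(3)[unfolded is_interval_1, rule_format, of "real a * s" "real a * t" "real a * x"]
      by (auto simp: dilation_preimage_def mult_left_mono)
  qed
  ultimately show ?thesis by (simp add: C_obj_def)
qed

lemma dilation_into_preimage:
  assumes "C_obj Q" "(\<lambda>x. real q * x) ` Q \<subseteq> \<Omega>" "a * u = q"
  shows "(\<lambda>x. real u * x) ` Q \<subseteq> dilation_preimage a \<Omega>"
proof
  fix y assume "y \<in> (\<lambda>x. real u * x) ` Q"
  then obtain x where x: "x \<in> Q" and y: "y = real u * x" by auto
  have "real a * y = real q * x"
    unfolding y assms(3)[symmetric] by (simp add: mult.assoc)
  moreover have "0 \<le> y"
    unfolding y using C_obj_nonneg[OF assms(1) x] by simp
  ultimately show "y \<in> dilation_preimage a \<Omega>"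
    using assms(2) x by (auto simp: dilation_preimage_def)
qed

lemma common_multiple_factors_through_lcm:
  fixes n1 n2 q1 q2 :: nat
  assumes "n1 * q1 = n2 * q2" "n1 \<noteq> 0" "n2 \<noteq> 0"
  obtains u where "q1 = lcm n1 n2 div n1 * u" "q2 = lcm n1 n2 div n2 * u"
proof -
  have "lcm n1 n2 dvd n1 * q1"
    using assms(1) by (metis dvd_triv_left lcm_least)
  then obtain u where u: "n1 * q1 = lcm n1 n2 * u" ..
  have "n1 * q1 = n1 * (lcm n1 n2 div n1 * u)" "n2 * q2 = n2 * (lcm n1 n2 div n2 * u)"
    using u assms(1) by (simp_all add: mult.assoc[symmetric])
  then have "q1 = lcm n1 n2 div n1 * u" "q2 = lcm n1 n2 div n2 * u"
    using assms(2,3) by simp_all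
  then show ?thesis by (rule that)
qed

context
  fixes \<Omega>1 \<Omega>2 :: "real set" and n1 n2 :: nat
  assumes n_pos: "n1 > 0" "n2 > 0"
begin

abbreviation "fibre \<equiv>
  dilation_preimage (lcm n1 n2 div n1) \<Omega>1 \<inter> dilation_preimage (lcm n1 n2 div n2) \<Omega>2"

lemma lcm_div_pos: "lcm n1 n2 div n1 > 0" "lcm n1 n2 div n2 > 0"
  using n_pos by (auto simp: div_greater_zero_iff intro: dvd_imp_le lcm_pos_nat)

lemma C_obj_fibre: "C_obj \<Omega>1 \<Longrightarrow> C_obj \<Omega>2 \<Longrightarrow> C_obj fibre"
  using lcm_div_pos by (intro C_obj_Int C_obj_dilation_preimage)

lemma cone_factors_through_fibre:
  assumes "C_obj Q" "Q \<noteq> {}" "q1 \<in> C_hom Q \<Omega>1" "q2 \<in> C_hom Q \<Omega>2" "n1 * q1 = n2 * q2"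
  obtains u where "u \<in> C_hom Q fibre" "q1 = lcm n1 n2 div n1 * u" "q2 = lcm n1 n2 div n2 * u"
proof -
  obtain u where u: "q1 = lcm n1 n2 div n1 * u" "q2 = lcm n1 n2 div n2 * u"
    using common_multiple_factors_through_lcm assms(5) n_pos by blast
  have q: "q1 > 0" "(\<lambda>x. real q1 * x) ` Q \<subseteq> \<Omega>1" "(\<lambda>x. real q2 * x) ` Q \<subseteq> \<Omega>2"
    using assms(2-4) by (auto simp: C_hom_nonempty_iff)
  have "u > 0" using q(1) u(1) by (cases u) auto
  moreover have "(\<lambda>x. real u * x) ` Q \<subseteq> fibre"
    using dilation_into_preimage[OF assms(1) q(2) u(1)[symmetric]]
      dilation_into_preimage[OF assms(1) q(3) u(2)[symmetric]] by blast
  ultimately show ?thesis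
    using that u assms(2) by (simp add: C_hom_nonempty_iff)
qed

lemma C_pullback_fibre:
  assumes "C_obj \<Omega>1" "C_obj \<Omega>2" "fibre \<noteq> {}"
  shows "C_pullback \<Omega>1 \<Omega>2 \<Omega> n1 n2 fibre (lcm n1 n2 div n1) (lcm n1 n2 div n2)"
  unfolding C_pullback_def
proof (intro conjI allI impI)
  show "C_obj fibre"
    using assms(1,2) by (rule C_obj_fibre)
  show "n1 * (lcm n1 n2 div n1) = n2 * (lcm n1 n2 div n2)"
    by simp
  show "lcm n1 n2 div n1 \<in> C_hom fibre \<Omega>1" "lcm n1 n2 div n2 \<in> C_hom fibre \<Omega>2"
    using assms(3) lcm_div_pos by (auto simp: C_hom_nonempty_iff dilation_preimage_def)
  fix Q q1 q2
  assume cone: "C_obj Q \<and> q1 \<in> C_hom Q \<Omega>1 \<and> q2 \<in> C_hom Q \<Omega>2 \<and> n1 * q1 = n2 * q2"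
  show "\<exists>!u. u \<in> C_hom Q fibre \<and> lcm n1 n2 div n1 * u = q1 \<and> lcm n1 n2 div n2 * u = q2"
  proof (cases "Q = {}")
    case True
    with cone show ?thesis by (auto simp: C_hom_empty)
  next
    case False
    then obtain u where "u \<in> C_hom Q fibre" "q1 = lcm n1 n2 div n1 * u" "q2 = lcm n1 n2 div n2 * u"
      using cone_factors_through_fibre cone by blast
    with lcm_div_pos show ?thesis by auto
  qed
qed

lemma C_pullback_empty_fibre:
  assumes "fibre = {}"
  shows "C_pullback \<Omega>1 \<Omega>2 \<Omega> n1 n2 {} 0 0"
  unfolding C_pullback_def
proof (intro conjI allI impI C_obj_empty)
  show "0 \<in> C_hom {} \<Omega>1" "0 \<in> C_hom {} \<Omega>2" "n1 * 0 = n2 * 0"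
    by (simp_all add: C_hom_empty)
  fix Q q1 q2
  assume cone: "C_obj Q \<and> q1 \<in> C_hom Q \<Omega>1 \<and> q2 \<in> C_hom Q \<Omega>2 \<and> n1 * q1 = n2 * q2"
  have "Q = {}"
  proof (rule ccontr)
    assume "Q \<noteq> {}"
    then obtain u where "u \<in> C_hom Q fibre"
      using cone_factors_through_fibre cone by blast
    with \<open>Q \<noteq> {}\<close> assms show False by (auto simp: C_hom_nonempty_iff)
  qed
  with cone show "\<exists>!u. u \<in> C_hom Q {} \<and> 0 * u = q1 \<and> 0 * u = q2"
    by (auto simp: C_hom_empty)
qed

end

theorem lemma2p4:
  fixes \<Omega>1 \<Omega>2 \<Omega> :: "real set" and n1 n2 :: nat
  assumes "C_obj \<Omega>1" "C_obj \<Omega>2" "C_obj \<Omega>"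
    and "\<Omega>1 \<noteq> {}" "\<Omega>2 \<noteq> {}"
    and "n1 \<in> C_hom \<Omega>1 \<Omega>" "n2 \<in> C_hom \<Omega>2 \<Omega>"
  defines "a1 \<equiv> lcm n1 n2 div n1" and "a2 \<equiv> lcm n1 n2 div n2"
    and "\<Omega>' \<equiv> {t::real. 0 \<le> t \<and> real (lcm n1 n2 div n1) * t \<in> \<Omega>1 \<and> real (lcm n1 n2 div n2) * t \<in> \<Omega>2}"
  shows "C_obj \<Omega>' \<and>
    (\<Omega>' \<noteq> {} \<longrightarrow> a1 \<in> C_hom \<Omega>' \<Omega>1 \<and> a2 \<in> C_hom \<Omega>' \<Omega>2 \<and>
        C_pullback \<Omega>1 \<Omega>2 \<Omega> n1 n2 \<Omega>' a1 a2) \<and>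
    (\<Omega>' = {} \<longrightarrow> (\<exists>p1 p2. C_pullback \<Omega>1 \<Omega>2 \<Omega> n1 n2 {} p1 p2))"
proof -
  have n_pos: "n1 > 0" "n2 > 0"
    using assms(4-7) by (auto simp: C_hom_nonempty_iff)
  have fibre: "\<Omega>' = dilation_preimage a1 \<Omega>1 \<inter> dilation_preimage a2 \<Omega>2"
    unfolding \<Omega>'_def a1_def a2_def dilation_preimage_def by auto
  have "C_obj \<Omega>'"
    using C_obj_fibre[OF n_pos assms(1,2)] unfolding fibre a1_def a2_def .
  moreover have pullback: "C_pullback \<Omega>1 \<Omega>2 \<Omega> n1 n2 \<Omega>' a1 a2" if "\<Omega>' \<noteq> {}"
    using C_pullback_fibre[OF n_pos assms(1,2)] that unfolding fibre a1_def a2_def by blast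
  moreover have "a1 \<in> C_hom \<Omega>' \<Omega>1 \<and> a2 \<in> C_hom \<Omega>' \<Omega>2" if "\<Omega>' \<noteq> {}"
    using pullback[OF that] by (simp add: C_pullback_def)
  moreover have "C_pullback \<Omega>1 \<Omega>2 \<Omega> n1 n2 {} 0 0" if "\<Omega>' = {}"
    using C_pullback_empty_fibre[OF n_pos] that unfolding fibre a1_def a2_def by blast
  ultimately show ?thesis
    by blast
qed

end
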